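(* For every $N\ge1$ and every $f\in H_N^{\mathrm{sip}}$ one has $\mathcal E_N(f)\ge\mathcal R_N(f)$, where $\mathcal E_N$ and $\mathcal R_N$ are the Dirichlet forms described in the context.
   Context: Fix $\gamma>0$ and $p:\mathbb R\to[0,\infty)$ symmetric, finite range $R$, $p(0)=0$. $p_N(r)=p(Nr)$, $A_N=\frac1N\{-R,\dots,R\}\setminus\{0\}$, $A_N^+=\{|r|:r\in A_N\}$. $\mu_N$ gives mass $\frac1N$ to each point of $\frac1N\mathbb Z$, $\nu_{\gamma,N}=\mu_N+\sqrt2\gamma\delta_0$, $H_N^{\mathrm{sip}}=L^2(\frac1N\mathbb Z,\nu_{\gamma,N})$. $\mathcal E_N(f)=-\sum_{w\in\frac1N\mathbb Z}f(w)\sum_{r\in A_N}2p_N(r)\big(\frac{N^2}2+\frac{N^3\gamma}{\sqrt2}\mathbf 1_{\{r=-w\}}\big)(f(w+r)-f(w))\,\nu_{\gamma,N}(w)$ (the Dirichlet form of the rescaled SIP difference process). $\mathcal R_N(f)=-\sum_{v\in\frac1N\mathbb Z}f(v)\,\Delta_Nf(v)\,\mu_N(v)$ with $\Delta_Ng(v)=N^2\sum_{r\in A_N^+}p_N(r)[g(v+r)-2g(v)+g(v-r)]$ (the Dirichlet form of the diffusively rescaled random walk). *)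

theory Defs
  imports "HOL-Analysis.Analysis"
begin

definition lattice :: "nat \<Rightarrow> real set" where
  "lattice N = {real_of_int k / real N | k. True}"

definition mu_N :: "nat \<Rightarrow> real \<Rightarrow> real" where
  "mu_N N w = 1 / real N"

definition nu_N :: "real \<Rightarrow> nat \<Rightarrow> real \<Rightarrow> real" where
  "nu_N \<gamma> N w = mu_N N w + (if w = 0 then sqrt 2 * \<gamma> else 0)"

definition p_N :: "(real \<Rightarrow> real) \<Rightarrow> nat \<Rightarrow> real \<Rightarrow> real" where
  "p_N p N r = p (real N * r)"

definition A_N :: "nat \<Rightarrow> nat \<Rightarrow> real set" where
  "A_N R N = {real_of_int j / real N | j. j \<in> {- int R .. int R} \<and> j \<noteq> 0}"

definition A_N_plus :: "nat \<Rightarrow> nat \<Rightarrow> real set" where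
  "A_N_plus R N = abs ` A_N R N"

text \<open>Membership in H_N^sip = L^2((1/N)Z, nu_{gamma,N}).\<close>
definition in_H_sip :: "real \<Rightarrow> nat \<Rightarrow> (real \<Rightarrow> real) \<Rightarrow> bool" where
  "in_H_sip \<gamma> N f \<longleftrightarrow> (\<lambda>w. (f w)\<^sup>2 * nu_N \<gamma> N w) summable_on lattice N"

text \<open>Dirichlet form of the rescaled SIP difference process.\<close>
definition E_N :: "(real \<Rightarrow> real) \<Rightarrow> nat \<Rightarrow> real \<Rightarrow> nat \<Rightarrow> (real \<Rightarrow> real) \<Rightarrow> real" where
  "E_N p R \<gamma> N f = - (\<Sum>\<^sub>\<infinity>w\<in>lattice N.
      f w * (\<Sum>r\<in>A_N R N. 2 * p_N p N r *
        ((real N)\<^sup>2 / 2 + (real N)^3 * \<gamma> / sqrt 2 * (if r = - w then 1 else 0)) *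
        (f (w + r) - f w)) * nu_N \<gamma> N w)"

definition Delta_N :: "(real \<Rightarrow> real) \<Rightarrow> nat \<Rightarrow> nat \<Rightarrow> (real \<Rightarrow> real) \<Rightarrow> real \<Rightarrow> real" where
  "Delta_N p R N g v = (real N)\<^sup>2 * (\<Sum>r\<in>A_N_plus R N. p_N p N r * (g (v + r) - 2 * g v + g (v - r)))"

text \<open>Dirichlet form of the diffusively rescaled random walk.\<close>
definition R_N :: "(real \<Rightarrow> real) \<Rightarrow> nat \<Rightarrow> nat \<Rightarrow> (real \<Rightarrow> real) \<Rightarrow> real" where
  "R_N p R N f = - (\<Sum>\<^sub>\<infinity>v\<in>lattice N. f v * Delta_N p R N f v * mu_N N v)"

end

theory Submission
  imports Defs
begin

text \<open>
  The SIP form differs from the random-walk form only through the atom \<open>\<surd>2 \<gamma> \<delta>\<^sub>0\<close> of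
  \<open>\<nu>\<^sub>\<gamma>\<^sub>,\<^sub>N\<close>, which weights the jumps out of \<open>0\<close>, and the accelerated jumps into \<open>0\<close>
  (the extra rate for \<open>r = -w\<close>). These two corrections are in detailed balance, so
  together they form a Dirichlet form of their own:
  \<open>E\<^sub>N(f) - R\<^sub>N(f) = \<surd>2 \<gamma> N\<^sup>2 \<Sum>\<^sub>r p\<^sub>N(r) (f(r) - f(0))\<^sup>2 \<ge> 0\<close>.
  Because the summands of the two infinite sums differ only on the finite set
  \<open>{0} \<union> A\<^sub>N\<close>, no summability of \<open>f\<close> is needed: either both sums converge or
  both diverge, and a divergent \<open>infsum\<close> is \<open>0\<close>.
\<close>

lemma infsum_le_infsum_finite_perturbation:
  fixes e \<rho> :: "'a \<Rightarrow> real"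
  assumes "finite F" "F \<subseteq> A"
    and agree: "\<And>x. x \<in> A - F \<Longrightarrow> e x = \<rho> x"
    and le: "(\<Sum>x\<in>F. e x) \<le> (\<Sum>x\<in>F. \<rho> x)"
  shows "infsum e A \<le> infsum \<rho> A"
proof -
  have diff_has_sum: "((\<lambda>x. g x - h x) has_sum (\<Sum>x\<in>F. g x - h x)) A"
    if "\<And>x. x \<in> A - F \<Longrightarrow> g x = h x" for g h :: "'a \<Rightarrow> real"
    by (rule has_sum_finite_neutralI) (use assms(1,2) that in auto)
  show ?thesis
  proof (cases "\<rho> summable_on A")
    case True
    have "((\<lambda>x. \<rho> x + (e x - \<rho> x)) has_sum (infsum \<rho> A + (\<Sum>x\<in>F. e x - \<rho> x))) A"
      using True agree by (intro has_sum_add diff_has_sum) auto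
    then have "infsum e A = infsum \<rho> A + (\<Sum>x\<in>F. e x - \<rho> x)"
      by (simp add: infsumI)
    with le show ?thesis
      by (simp add: sum_subtractf)
  next
    case False
    have "\<not> e summable_on A"
    proof
      assume "e summable_on A"
      moreover have "(\<lambda>x. \<rho> x - e x) summable_on A"
        using diff_has_sum[of \<rho> e] agree unfolding summable_on_def by auto
      ultimately have "(\<lambda>x. e x + (\<rho> x - e x)) summable_on A"
        by (rule summable_on_add)
      with False show False
        by simp
    qed
    with False show ?thesis
      by (simp add: infsum_not_exists)
  qed
qed

lemma sum_symmetric_set_eq_sum_positive:
  fixes A :: "'a::linordered_ab_group_add set"
  assumes "finite A" "0 \<notin> A" and sym: "\<And>r. r \<in> A \<Longrightarrow> - r \<in> A"
  shows "(\<Sum>r\<in>A. g r) = (\<Sum>r\<in>{r\<in>A. 0 < r}. g r + g (- r))"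
proof -
  have split: "A = {r\<in>A. 0 < r} \<union> {r\<in>A. r < 0}"
    using assms(2) by (auto, metis neq_iff)
  have negative: "{r\<in>A. r < 0} = uminus ` {r\<in>A. 0 < r}"
    using sym by (auto intro!: image_eqI[where x = "- r" for r])
  have "(\<Sum>r\<in>A. g r) = (\<Sum>r\<in>{r\<in>A. 0 < r}. g r) + (\<Sum>r\<in>{r\<in>A. r < 0}. g r)"
    by (subst split, rule sum.union_disjoint) (use assms(1) in auto)
  also have "(\<Sum>r\<in>{r\<in>A. r < 0}. g r) = (\<Sum>r\<in>{r\<in>A. 0 < r}. g (- r))"
    unfolding negative by (subst sum.reindex) (auto simp: inj_on_def)
  finally show ?thesis
    by (simp add: sum.distrib)
qed

lemma abs_image_symmetric_set:
  fixes A :: "'a::{linordered_ab_group_add, abs_if} set"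
  assumes "0 \<notin> A" and sym: "\<And>r. r \<in> A \<Longrightarrow> - r \<in> A"
  shows "abs ` A = {r\<in>A. 0 < r}"
proof safe
  fix r assume "r \<in> A"
  moreover have "r \<noteq> 0"
    using assms(1) \<open>r \<in> A\<close> by auto
  ultimately show "\<bar>r\<bar> \<in> A" "0 < \<bar>r\<bar>"
    using sym by (auto simp: abs_if neq_iff)
next
  fix r assume "r \<in> A" "0 < r"
  then show "r \<in> abs ` A"
    by (intro image_eqI[where x = r]) (auto simp: abs_if)
qed

lemma finite_A_N: "finite (A_N R N)"
proof -
  have "A_N R N = (\<lambda>j. real_of_int j / real N) ` ({- int R .. int R} - {0})"
    by (auto simp: A_N_def)
  then show ?thesis
    by simp
qed

lemma zero_notin_A_N: "N \<noteq> 0 \<Longrightarrow> 0 \<notin> A_N R N"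
  by (auto simp: A_N_def)

lemma uminus_mem_A_N: "r \<in> A_N R N \<Longrightarrow> - r \<in> A_N R N"
  unfolding A_N_def by clarsimp (rule_tac x = "- j" in exI, auto)

lemma A_N_subset_lattice: "A_N R N \<subseteq> lattice N"
  by (auto simp: A_N_def lattice_def)

lemma zero_mem_lattice: "0 \<in> lattice N"
  unfolding lattice_def by (auto intro: exI[where x = 0])

lemma sum_A_N_eq_sum_A_N_plus:
  assumes "N \<noteq> 0"
  shows "(\<Sum>r\<in>A_N R N. g r) = (\<Sum>r\<in>A_N_plus R N. g r + g (- r))"
  unfolding A_N_plus_def
  using assms finite_A_N zero_notin_A_N uminus_mem_A_N
  by (simp add: abs_image_symmetric_set sum_symmetric_set_eq_sum_positive)

lemma Delta_N_eq_sum_A_N: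
  assumes "N \<noteq> 0" and p_sym: "\<And>x. p (- x) = p x"
  shows "Delta_N p R N f w = (real N)\<^sup>2 * (\<Sum>r\<in>A_N R N. p_N p N r * (f (w + r) - f w))"
proof -
  have "p_N p N (- r) = p_N p N r" for r
    unfolding p_N_def using p_sym[of "real N * r"] by simp
  then show ?thesis
    unfolding Delta_N_def sum_A_N_eq_sum_A_N_plus[OF assms(1)]
    by (simp add: algebra_simps)
qed

definition sip_generator ::
    "(real \<Rightarrow> real) \<Rightarrow> nat \<Rightarrow> real \<Rightarrow> nat \<Rightarrow> (real \<Rightarrow> real) \<Rightarrow> real \<Rightarrow> real" where
  "sip_generator p R \<gamma> N f w = (\<Sum>r\<in>A_N R N. 2 * p_N p N r *
      ((real N)\<^sup>2 / 2 + (real N)^3 * \<gamma> / sqrt 2 * (if r = - w then 1 else 0)) *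
      (f (w + r) - f w))"

definition sip_summand ::
    "(real \<Rightarrow> real) \<Rightarrow> nat \<Rightarrow> real \<Rightarrow> nat \<Rightarrow> (real \<Rightarrow> real) \<Rightarrow> real \<Rightarrow> real" where
  "sip_summand p R \<gamma> N f w = f w * sip_generator p R \<gamma> N f w * nu_N \<gamma> N w"

definition rw_summand :: "(real \<Rightarrow> real) \<Rightarrow> nat \<Rightarrow> nat \<Rightarrow> (real \<Rightarrow> real) \<Rightarrow> real \<Rightarrow> real" where
  "rw_summand p R N f v = f v * Delta_N p R N f v * mu_N N v"

lemma E_N_eq_infsum_sip_summand:
  "E_N p R \<gamma> N f = - infsum (sip_summand p R \<gamma> N f) (lattice N)"
  unfolding E_N_def sip_summand_def sip_generator_def ..

lemma R_N_eq_infsum_rw_summand: "R_N p R N f = - infsum (rw_summand p R N f) (lattice N)"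
  unfolding R_N_def rw_summand_def ..

lemma sip_generator_eq_Delta_N_plus_jump:
  assumes "N \<noteq> 0" and p_sym: "\<And>x. p (- x) = p x"
  shows "sip_generator p R \<gamma> N f w = Delta_N p R N f w +
      (if w \<in> A_N R N then sqrt 2 * \<gamma> * (real N)^3 * p_N p N w * (f 0 - f w) else 0)"
proof -
  let ?A = "A_N R N" and ?q = "p_N p N"
  have q_sym: "?q (- w) = ?q w"
    unfolding p_N_def using p_sym[of "real N * w"] by simp
  have jump_weight: "2 * q * ((real N)\<^sup>2 / 2 + (real N)^3 * \<gamma> / sqrt 2 * (if b then 1 else 0)) * d
      = (real N)\<^sup>2 * (q * d) + (if b then sqrt 2 * \<gamma> * (real N)^3 * q * d else 0)" for q d b
    by (simp add: field_simps)
  have "sip_generator p R \<gamma> N f w = (\<Sum>r\<in>?A. (real N)\<^sup>2 * (?q r * (f (w + r) - f w)) +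
        (if r = - w then sqrt 2 * \<gamma> * (real N)^3 * ?q r * (f (w + r) - f w) else 0))"
    unfolding sip_generator_def by (rule sum.cong) (simp_all only: jump_weight)
  also have "\<dots> = Delta_N p R N f w +
      (if - w \<in> ?A then sqrt 2 * \<gamma> * (real N)^3 * ?q (- w) * (f 0 - f w) else 0)"
    by (simp add: Delta_N_eq_sum_A_N[where p = p, OF assms] sum.distrib sum_distrib_left finite_A_N)
  finally show ?thesis
    using uminus_mem_A_N[of w] uminus_mem_A_N[of "- w"] q_sym by auto
qed

lemma sip_summand_minus_rw_summand:
  assumes "N \<noteq> 0" and p_sym: "\<And>x. p (- x) = p x"
  shows "sip_summand p R \<gamma> N f w - rw_summand p R N f w = sqrt 2 * \<gamma> * (real N)\<^sup>2 *
    ((if w = 0 then f 0 * (\<Sum>r\<in>A_N R N. p_N p N r * (f r - f 0)) else 0) +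
     (if w \<in> A_N R N then p_N p N w * f w * (f 0 - f w) else 0))"
proof -
  let ?J = "if w \<in> A_N R N then sqrt 2 * \<gamma> * (real N)^3 * p_N p N w * (f 0 - f w) else 0"
  have N: "real N > 0"
    using assms(1) by simp
  have sip: "sip_summand p R \<gamma> N f w
      = f w * (Delta_N p R N f w + ?J) * (1 / real N + (if w = 0 then sqrt 2 * \<gamma> else 0))"
    unfolding sip_summand_def sip_generator_eq_Delta_N_plus_jump[where p = p, OF assms] nu_N_def mu_N_def ..
  have rw: "rw_summand p R N f w = f w * Delta_N p R N f w / real N"
    by (simp add: rw_summand_def mu_N_def)
  have "0 \<notin> A_N R N"
    using zero_notin_A_N[OF assms(1)] .
  then consider "w = 0" "w \<notin> A_N R N" | "w \<noteq> 0" "w \<in> A_N R N" | "w \<noteq> 0" "w \<notin> A_N R N"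
    by blast
  then show ?thesis
  proof cases
    case 1
    then show ?thesis
      using N unfolding sip rw
      by (simp add: Delta_N_eq_sum_A_N[where p = p, OF assms] field_simps)
  next
    case 2
    then show ?thesis
      using N unfolding sip rw by (simp add: field_simps power2_eq_square power3_eq_cube)
  next
    case 3
    then show ?thesis
      unfolding sip rw by simp
  qed
qed

lemma sum_sip_minus_rw_summand:
  assumes "N \<noteq> 0" and p_sym: "\<And>x. p (- x) = p x"
  shows "(\<Sum>w\<in>insert 0 (A_N R N). sip_summand p R \<gamma> N f w - rw_summand p R N f w)
    = - (sqrt 2 * \<gamma> * (real N)\<^sup>2 * (\<Sum>r\<in>A_N R N. p_N p N r * (f r - f 0)\<^sup>2))"
proof -
  let ?A = "A_N R N" and ?q = "p_N p N"
  have "0 \<notin> ?A"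
    using zero_notin_A_N[OF assms(1)] .
  then have "(\<Sum>w\<in>insert 0 ?A. sip_summand p R \<gamma> N f w - rw_summand p R N f w)
      = sqrt 2 * \<gamma> * (real N)\<^sup>2 *
        (f 0 * (\<Sum>r\<in>?A. ?q r * (f r - f 0)) + (\<Sum>r\<in>?A. ?q r * f r * (f 0 - f r)))"
    by (auto simp: sip_summand_minus_rw_summand[where p = p, OF assms] finite_A_N sum_distrib_left
        distrib_left intro!: sum.cong)
  also have "f 0 * (\<Sum>r\<in>?A. ?q r * (f r - f 0)) + (\<Sum>r\<in>?A. ?q r * f r * (f 0 - f r))
      = - (\<Sum>r\<in>?A. ?q r * (f r - f 0)\<^sup>2)"
  proof -
    have "f 0 * (\<Sum>r\<in>?A. ?q r * (f r - f 0)) + (\<Sum>r\<in>?A. ?q r * f r * (f 0 - f r))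
        = (\<Sum>r\<in>?A. - (?q r * (f r - f 0)\<^sup>2))"
      unfolding sum_distrib_left sum.distrib[symmetric]
      by (rule sum.cong) (simp_all add: power2_eq_square algebra_simps)
    then show ?thesis
      by (simp add: sum_negf)
  qed
  finally show ?thesis
    by simp
qed

theorem proposition5p6:
  fixes p :: "real \<Rightarrow> real" and R :: nat and \<gamma> :: real and N :: nat and f :: "real \<Rightarrow> real"
  assumes gamma_pos: "\<gamma> > 0"
    and p_nonneg: "\<And>x. p x \<ge> 0"
    and p_sym: "\<And>x. p (- x) = p x"
    and p_range: "\<And>x. \<bar>x\<bar> > real R \<Longrightarrow> p x = 0"
    and p_zero: "p 0 = 0"
    and N_pos: "N \<ge> 1"
    and f_H: "in_H_sip \<gamma> N f"
  shows "E_N p R \<gamma> N f \<ge> R_N p R N f"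
proof -
  have N: "N \<noteq> 0"
    using N_pos by simp
  have "infsum (sip_summand p R \<gamma> N f) (lattice N) \<le> infsum (rw_summand p R N f) (lattice N)"
  proof (rule infsum_le_infsum_finite_perturbation)
    show "finite (insert 0 (A_N R N))" "insert 0 (A_N R N) \<subseteq> lattice N"
      using finite_A_N A_N_subset_lattice zero_mem_lattice by auto
    show "sip_summand p R \<gamma> N f w = rw_summand p R N f w" if "w \<in> lattice N - insert 0 (A_N R N)" for w
      using that sip_summand_minus_rw_summand[where p = p, OF N p_sym, of R \<gamma> f w] by simp
    have "0 \<le> sqrt 2 * \<gamma> * (real N)\<^sup>2 * (\<Sum>r\<in>A_N R N. p_N p N r * (f r - f 0)\<^sup>2)"
      using gamma_pos p_nonneg by (simp add: p_N_def sum_nonneg)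
    then show "(\<Sum>w\<in>insert 0 (A_N R N). sip_summand p R \<gamma> N f w)
        \<le> (\<Sum>w\<in>insert 0 (A_N R N). rw_summand p R N f w)"
      using sum_sip_minus_rw_summand[where p = p, OF N p_sym, of R \<gamma> f] by (simp add: sum_subtractf)
  qed
  then show ?thesis
    by (simp add: E_N_eq_infsum_sip_summand R_N_eq_infsum_rw_summand)
qed

end
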